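(* Fix a real number $\beta>-1$. Let $\phi$ be an analytic self-map of $\mathbb{D}$ whose Denjoy–Wolff point $\omega$ lies on the unit circle $\mathbb{T}$. If $\lambda$ is an eigenvalue of the composition operator $C_\phi:A^2_\beta\to A^2_\beta$, $C_\phi f=f\circ\phi$, having a cyclic function as a corresponding eigenvector, then $C_\phi-\lambda I$ has dense range in $A^2_\beta$.
   Context: $\mathbb{D}$ is the open unit disc and $\mathbb{T}$ the unit circle. For $\beta>-1$, $A^2_\beta$ is the Hilbert space of analytic functions $f(z)=\sum_{n\ge0}\widehat f(n)z^n$ on $\mathbb{D}$ with inner product $\langle f,g\rangle=\sum_{n\ge0}\frac{n!\,\Gamma(2+\beta)}{\Gamma(n+2+\beta)}\widehat f(n)\overline{\widehat g(n)}$ (equivalently the $L^2$ inner product with respect to $(\beta+1)(1-|z|^2)^\beta dA(z)$, $dA$ normalized area measure); every composition operator $C_\phi$ with $\phi$ an analytic self-map of $\mathbb{D}$ is bounded on it. A function $f\in A^2_\beta$ is cyclic if its polynomial multiples $\{pf\}$ are dense in $A^2_\beta$. If an analytic self-map $\phi$ of $\mathbb{D}$ is not an elliptic automorphism (an automorphism of $\mathbb{D}$ with a fixed point in $\mathbb{D}$), there is a unique $\omega\in\overline{\mathbb{D}}$ with $\lim_{n\to\infty}\phi^{[n]}(z)=\omega$ for all $z\in\mathbb{D}$, where $\phi^{[n]}$ is the $n$-th iterate; $\omega$ is the Denjoy–Wolff point of $\phi$. *)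

theory Defs
  imports "HOL-Analysis.Analysis" "HOL-Computational_Algebra.Polynomial"
begin

definition taylor_coeff :: "(complex \<Rightarrow> complex) \<Rightarrow> nat \<Rightarrow> complex" where
  "taylor_coeff f n = (deriv ^^ n) f 0 / of_nat (fact n)"

definition bergman_weight :: "real \<Rightarrow> nat \<Rightarrow> real" where
  "bergman_weight \<beta> n = fact n * Gamma (2 + \<beta>) / Gamma (real n + 2 + \<beta>)"

definition A2 :: "real \<Rightarrow> (complex \<Rightarrow> complex) set" where
  "A2 \<beta> = {f. f holomorphic_on ball 0 1 \<and>
      summable (\<lambda>n. bergman_weight \<beta> n * (cmod (taylor_coeff f n))\<^sup>2)}"

definition A2_norm :: "real \<Rightarrow> (complex \<Rightarrow> complex) \<Rightarrow> real" where
  "A2_norm \<beta> f = sqrt (\<Sum>n. bergman_weight \<beta> n * (cmod (taylor_coeff f n))\<^sup>2)"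

definition cyclic_A2 :: "real \<Rightarrow> (complex \<Rightarrow> complex) \<Rightarrow> bool" where
  "cyclic_A2 \<beta> f \<longleftrightarrow> f \<in> A2 \<beta> \<and>
     (\<forall>g \<in> A2 \<beta>. \<forall>\<epsilon>>0. \<exists>p :: complex poly.
        A2_norm \<beta> (\<lambda>z. poly p z * f z - g z) < \<epsilon>)"

definition self_map_disc :: "(complex \<Rightarrow> complex) \<Rightarrow> bool" where
  "self_map_disc \<phi> \<longleftrightarrow> \<phi> holomorphic_on ball 0 1 \<and> \<phi> ` ball 0 1 \<subseteq> ball 0 1"

definition elliptic_automorphism :: "(complex \<Rightarrow> complex) \<Rightarrow> bool" where
  "elliptic_automorphism \<phi> \<longleftrightarrow> \<phi> holomorphic_on ball 0 1 \<and>
     bij_betw \<phi> (ball 0 1) (ball 0 1) \<and> (\<exists>z \<in> ball 0 1. \<phi> z = z)"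

definition denjoy_wolff_point :: "(complex \<Rightarrow> complex) \<Rightarrow> complex \<Rightarrow> bool" where
  "denjoy_wolff_point \<phi> \<omega> \<longleftrightarrow> self_map_disc \<phi> \<and> \<not> elliptic_automorphism \<phi> \<and>
     \<omega> \<in> cball 0 1 \<and> (\<forall>z \<in> ball 0 1. (\<lambda>n. (\<phi> ^^ n) z) \<longlonglongrightarrow> \<omega>)"

definition comp_eigenvector :: "real \<Rightarrow> (complex \<Rightarrow> complex) \<Rightarrow> complex \<Rightarrow> (complex \<Rightarrow> complex) \<Rightarrow> bool" where
  "comp_eigenvector \<beta> \<phi> lam f \<longleftrightarrow> f \<in> A2 \<beta> \<and> (\<exists>z \<in> ball 0 1. f z \<noteq> 0) \<and>
     (\<forall>z \<in> ball 0 1. f (\<phi> z) = lam * f z)"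

definition comp_minus_dense_range :: "real \<Rightarrow> (complex \<Rightarrow> complex) \<Rightarrow> complex \<Rightarrow> bool" where
  "comp_minus_dense_range \<beta> \<phi> lam \<longleftrightarrow>
     (\<forall>g \<in> A2 \<beta>. \<forall>\<epsilon>>0. \<exists>h \<in> A2 \<beta>.
        A2_norm \<beta> (\<lambda>z. h (\<phi> z) - lam * h z - g z) < \<epsilon>)"

end

theory Submission
  imports Defs "HOL-Complex_Analysis.Complex_Analysis"
begin

text \<open>If \<open>f \<circ> \<phi> = \<lambda> f\<close> with \<open>\<lambda> \<noteq> 0\<close> and \<open>Q\<close> is a polynomial, then
  \<open>h = - \<lambda>\<^sup>-\<^sup>1 (\<Sum>k<N. Q \<circ> \<phi>\<^sub>k) f\<close>, with \<open>\<phi>\<^sub>k\<close> the \<open>k\<close>-th iterate, satisfies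
  \<open>h \<circ> \<phi> - \<lambda> h = (Q - Q \<circ> \<phi>\<^sub>N) f\<close>. Since \<open>\<phi>\<^sub>N \<rightarrow> \<omega>\<close> pointwise and \<open>Q\<close> is bounded on the closed
  disc, dominated convergence puts \<open>(Q - Q(\<omega>)) f\<close> in the closure of the range of \<open>C\<^sub>\<phi> - \<lambda>I\<close>.
  When \<open>|\<omega>| = 1\<close>, a polynomial peaking at \<open>\<omega>\<close> approximates every \<open>p f\<close> by such functions, and
  cyclicity of \<open>f\<close> makes the range dense.

  Dominated convergence applies because the squared norm of \<open>A\<^sup>2\<^sub>\<beta>\<close> is
  \<open>\<integral>\<^sub>0\<^sup>1 (\<beta>+1)(1-s)\<^sup>\<beta> M(s) ds\<close>, where \<open>M(s) = \<Sum> |F\<^sub>n|\<^sup>2 s\<^sup>n\<close> is, by Parseval's identity, the mean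
  of \<open>|F|\<^sup>2\<close> over the circle of radius \<open>\<surd>s\<close>.\<close>

section \<open>The norm of \<open>A\<^sup>2\<^sub>\<beta>\<close> as an average of circle means\<close>

definition bergman_density :: "real \<Rightarrow> real \<Rightarrow> real" where
  "bergman_density \<beta> s = (\<beta> + 1) * (1 - s) powr \<beta>"

lemma bergman_weight_nonneg: "\<beta> > -1 \<Longrightarrow> 0 \<le> bergman_weight \<beta> n"
  unfolding bergman_weight_def by (intro divide_nonneg_pos mult_nonneg_nonneg Gamma_real_pos) auto

lemma bergman_weight_eq_Beta:
  assumes "\<beta> > -1"
  shows "bergman_weight \<beta> n = (\<beta> + 1) * Beta (real n + 1) (\<beta> + 1)"
proof -
  have "Gamma (\<beta> + 2) = (\<beta> + 1) * Gamma (\<beta> + 1)"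
    using Gamma_plus1[of "\<beta> + 1"] assms by (auto simp: add_ac nonpos_Ints_def)
  moreover have "Gamma (real n + 1) = fact n"
    using Gamma_fact[of n] by (simp add: add_ac)
  ultimately show ?thesis
    unfolding Beta_def bergman_weight_def by (simp add: add_ac)
qed

lemma nn_integral_bergman_density_power:
  assumes "\<beta> > -1"
  shows "(\<integral>\<^sup>+ s. ennreal (indicator {0<..<1} s * bergman_density \<beta> s * s ^ n) \<partial>lborel)
         = ennreal (bergman_weight \<beta> n)"
proof -
  have "((\<lambda>t. t powr (real n + 1 - 1) * (1 - t) powr (\<beta> + 1 - 1))
          has_integral Beta (real n + 1) (\<beta> + 1)) {0..1}"
    by (rule has_integral_Beta_real) (use assms in auto)
  then have "((\<lambda>t. (\<beta> + 1) * (t powr real n * (1 - t) powr \<beta>))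
          has_integral bergman_weight \<beta> n) {0..1}"
    unfolding bergman_weight_eq_Beta[OF assms] by (intro has_integral_mult_right) simp
  then have "(\<integral>\<^sup>+ s. ennreal (indicator {0..1} s * ((\<beta> + 1) * (s powr real n * (1 - s) powr \<beta>))) \<partial>lborel)
       = ennreal (bergman_weight \<beta> n)"
    by (rule nn_integral_has_integral_lebesgue[rotated]) (use assms in auto)
  moreover have "AE s in lborel. ennreal (indicator {0<..<1} s * bergman_density \<beta> s * s ^ n) =
      ennreal (indicator {0..1} s * ((\<beta> + 1) * (s powr real n * (1 - s) powr \<beta>)))"
    using AE_lborel_singleton[of 0] AE_lborel_singleton[of 1]
    by eventually_elim
      (auto simp: indicator_def bergman_density_def powr_realpow mult_ac)
  ultimately show ?thesis
    by (simp add: nn_integral_cong_AE)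
qed

definition coeff_sq_series :: "(complex \<Rightarrow> complex) \<Rightarrow> real \<Rightarrow> ennreal" where
  "coeff_sq_series F s = (\<Sum>n. ennreal ((cmod (taylor_coeff F n))\<^sup>2 * s ^ n))"

text \<open>The squared norm of \<open>A2 \<beta>\<close>, with value \<open>\<infinity>\<close> outside the space, where \<^const>\<open>A2_norm\<close>
  is a junk value.\<close>
definition A2_energy :: "real \<Rightarrow> (complex \<Rightarrow> complex) \<Rightarrow> ennreal" where
  "A2_energy \<beta> F = (\<Sum>n. ennreal (bergman_weight \<beta> n * (cmod (taylor_coeff F n))\<^sup>2))"

lemma measurable_coeff_sq_series [measurable]: "coeff_sq_series F \<in> borel_measurable borel"
  unfolding coeff_sq_series_def by measurable

lemma measurable_bergman_density [measurable]:
  "(\<lambda>s. ennreal (indicator {0<..<1} s * bergman_density \<beta> s)) \<in> borel_measurable borel"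
  unfolding bergman_density_def by measurable

text \<open>In polar coordinates with \<open>s = r\<^sup>2\<close>, the measure \<open>(\<beta>+1)(1-|z|\<^sup>2)\<^sup>\<beta> dA(z)\<close> becomes
  \<open>bergman_density \<beta> s ds dt / (2\<pi>)\<close>.\<close>
lemma A2_energy_eq_nn_integral:
  assumes "\<beta> > -1"
  shows "A2_energy \<beta> F =
    (\<integral>\<^sup>+ s. ennreal (indicator {0<..<1} s * bergman_density \<beta> s) * coeff_sq_series F s \<partial>lborel)"
proof -
  let ?w = "\<lambda>s. indicator {0<..<1} s * bergman_density \<beta> s"
  have "(\<integral>\<^sup>+ s. ennreal (?w s) * coeff_sq_series F s \<partial>lborel)
     = (\<integral>\<^sup>+ s. (\<Sum>n. ennreal ((cmod (taylor_coeff F n))\<^sup>2) * ennreal (?w s * s ^ n)) \<partial>lborel)"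
  proof (rule nn_integral_cong)
    fix s :: real
    have "ennreal (?w s) * ennreal ((cmod (taylor_coeff F n))\<^sup>2 * s ^ n)
        = ennreal ((cmod (taylor_coeff F n))\<^sup>2) * ennreal (?w s * s ^ n)" for n
      using assms by (cases "s \<in> {0<..<1}")
        (simp_all add: bergman_density_def ennreal_mult'[symmetric] mult_ac)
    then show "ennreal (?w s) * coeff_sq_series F s
        = (\<Sum>n. ennreal ((cmod (taylor_coeff F n))\<^sup>2) * ennreal (?w s * s ^ n))"
      unfolding coeff_sq_series_def by (simp add: ennreal_suminf_cmult[symmetric])
  qed
  also have "\<dots> = (\<Sum>n. \<integral>\<^sup>+ s. ennreal ((cmod (taylor_coeff F n))\<^sup>2) * ennreal (?w s * s ^ n) \<partial>lborel)"
    by (rule nn_integral_suminf) (simp add: bergman_density_def)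
  also have "\<dots> = (\<Sum>n. ennreal ((cmod (taylor_coeff F n))\<^sup>2) * ennreal (bergman_weight \<beta> n))"
    by (intro suminf_cong, subst nn_integral_cmult)
      (simp_all add: bergman_density_def nn_integral_bergman_density_power[OF assms, unfolded bergman_density_def])
  also have "\<dots> = A2_energy \<beta> F"
    unfolding A2_energy_def using bergman_weight_nonneg[OF assms]
    by (intro suminf_cong) (simp add: ennreal_mult'[symmetric] mult_ac)
  finally show ?thesis ..
qed

lemma A2_iff_energy_finite:
  assumes "\<beta> > -1"
  shows "F \<in> A2 \<beta> \<longleftrightarrow> F holomorphic_on ball 0 1 \<and> A2_energy \<beta> F < \<infinity>"
proof -
  have nn: "\<And>n. 0 \<le> bergman_weight \<beta> n * (cmod (taylor_coeff F n))\<^sup>2"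
    using bergman_weight_nonneg[OF assms] by simp
  have "summable (\<lambda>n. bergman_weight \<beta> n * (cmod (taylor_coeff F n))\<^sup>2) \<longleftrightarrow> A2_energy \<beta> F < \<infinity>"
    unfolding A2_energy_def using ennreal_suminf_neq_top[OF _ nn] summable_suminf_not_top[OF nn]
    by (auto simp: top.not_eq_extremum)
  then show ?thesis unfolding A2_def by auto
qed

lemma A2_energy_eq_norm_sq:
  assumes "\<beta> > -1" and "F \<in> A2 \<beta>"
  shows "A2_energy \<beta> F = ennreal ((A2_norm \<beta> F)\<^sup>2)"
proof -
  have nn: "\<And>n. 0 \<le> bergman_weight \<beta> n * (cmod (taylor_coeff F n))\<^sup>2"
    using bergman_weight_nonneg[OF assms(1)] by simp
  have sm: "summable (\<lambda>n. bergman_weight \<beta> n * (cmod (taylor_coeff F n))\<^sup>2)"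
    using assms(2) unfolding A2_def by auto
  show ?thesis
    unfolding A2_energy_def A2_norm_def using suminf_ennreal2[OF nn sm] suminf_nonneg[OF sm nn] by simp
qed

lemma A2_norm_nonneg:
  assumes "\<beta> > -1" and "F \<in> A2 \<beta>"
  shows "A2_norm \<beta> F \<ge> 0"
  using assms bergman_weight_nonneg unfolding A2_norm_def A2_def by (simp add: suminf_nonneg)

lemma A2_norm_less_iff_energy:
  assumes "\<beta> > -1" and "F \<in> A2 \<beta>" and "\<epsilon> > 0"
  shows "A2_norm \<beta> F < \<epsilon> \<longleftrightarrow> A2_energy \<beta> F < ennreal (\<epsilon>\<^sup>2)"
proof -
  have "A2_norm \<beta> F < \<epsilon> \<longleftrightarrow> (A2_norm \<beta> F)\<^sup>2 < \<epsilon>\<^sup>2"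
    using A2_norm_nonneg[OF assms(1,2)] assms(3)
    by (auto intro: power_strict_mono power_less_imp_less_base)
  then show ?thesis
    using A2_energy_eq_norm_sq[OF assms(1,2)] by (simp add: ennreal_less_iff)
qed

section \<open>Parseval's identity on circles\<close>

lemma has_integral_cis_int:
  fixes k :: int
  shows "((\<lambda>t. cis (of_int k * t)) has_integral (if k = 0 then complex_of_real (2*pi) else 0)) {0..2*pi}"
proof (cases "k = 0")
  case True
  then show ?thesis
    using has_integral_const_real[of "1::complex" 0 "2*pi"] by (simp add: scaleR_conv_of_real)
next
  case False
  define G where "G t = cis (of_int k * t) / (\<i> * of_int k)" for t :: real
  have "((\<lambda>t. cis (of_int k * t)) has_integral (G (2*pi) - G 0)) {0..2*pi}"
  proof (rule fundamental_theorem_of_calculus)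
    fix x :: real
    have "((\<lambda>t. cis (of_int k * t)) has_derivative (\<lambda>t. (of_int k * t) *\<^sub>R (\<i> * cis (of_int k * x))))
        (at x within {0..2*pi})"
      by (intro has_derivative_cis derivative_eq_intros) auto
    then have "((\<lambda>t. cis (of_int k * t)) has_vector_derivative (of_int k * (\<i> * cis (of_int k * x))))
        (at x within {0..2*pi})"
      unfolding has_vector_derivative_def by (simp add: scaleR_conv_of_real mult_ac)
    then have "(G has_vector_derivative (of_int k * (\<i> * cis (of_int k * x))) / (\<i> * of_int k))
        (at x within {0..2*pi})"
      unfolding G_def by (intro has_vector_derivative_divide)
    then show "(G has_vector_derivative cis (of_int k * x)) (at x within {0..2*pi})"
      using False by (simp add: field_simps)
  qed simp
  moreover have "cis (of_int k * (2*pi)) = 1"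
    by (metis cis_multiple_2pi mult.commute Ints_of_int)
  then have "G (2*pi) = G 0"
    unfolding G_def by simp
  ultimately show ?thesis using False by simp
qed

lemma has_integral_norm_sq_trig_sum:
  fixes c :: "nat \<Rightarrow> complex"
  shows "((\<lambda>t. (cmod (\<Sum>n<K. c n * cis (real n * t)))\<^sup>2) has_integral
          (2*pi * (\<Sum>n<K. (cmod (c n))\<^sup>2))) {0..2*pi}"
proof -
  define S where "S t = (\<Sum>n<K. c n * cis (real n * t))" for t
  have sq: "complex_of_real ((cmod (S t))\<^sup>2)
      = (\<Sum>n<K. \<Sum>m<K. c n * cnj (c m) * cis (of_int (int n - int m) * t))" for t
  proof -
    have "complex_of_real ((cmod (S t))\<^sup>2) = S t * cnj (S t)"
      by (rule complex_norm_square)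
    also have "\<dots> = (\<Sum>n<K. \<Sum>m<K. (c n * cis (real n * t)) * (cnj (c m) * cis (- (real m * t))))"
      unfolding S_def by (simp add: sum_product cis_cnj)
    also have "\<dots> = (\<Sum>n<K. \<Sum>m<K. c n * cnj (c m) * cis (of_int (int n - int m) * t))"
    proof (intro sum.cong refl)
      fix n m
      have "cis (real n * t) * cis (- (real m * t)) = cis (of_int (int n - int m) * t)"
        by (simp add: cis_mult algebra_simps)
      then show "(c n * cis (real n * t)) * (cnj (c m) * cis (- (real m * t)))
          = c n * cnj (c m) * cis (of_int (int n - int m) * t)"
        by (metis mult.assoc mult.left_commute)
    qed
    finally show ?thesis .
  qed
  have orth: "(\<Sum>m<K. c n * cnj (c m) * (if int n - int m = 0 then complex_of_real (2*pi) else 0))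
       = c n * cnj (c n) * complex_of_real (2*pi)" if "n < K" for n
  proof -
    have "(\<Sum>m<K. c n * cnj (c m) * (if int n - int m = 0 then complex_of_real (2*pi) else 0))
       = (\<Sum>m<K. if m = n then c n * cnj (c m) * complex_of_real (2*pi) else 0)"
      by (intro sum.cong refl) auto
    then show ?thesis
      using that by (simp add: sum.delta')
  qed
  have "((\<lambda>t. \<Sum>n<K. \<Sum>m<K. c n * cnj (c m) * cis (of_int (int n - int m) * t)) has_integral
        (\<Sum>n<K. \<Sum>m<K. c n * cnj (c m) * (if int n - int m = 0 then complex_of_real (2*pi) else 0)))
        {0..2*pi}"
    by (intro has_integral_sum finite_lessThan has_integral_mult_right has_integral_cis_int)
  also have "(\<Sum>n<K. \<Sum>m<K. c n * cnj (c m) * (if int n - int m = 0 then complex_of_real (2*pi) else 0))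
      = complex_of_real (2*pi * (\<Sum>n<K. (cmod (c n))\<^sup>2))"
    using orth by (simp add: complex_norm_square[symmetric] sum_distrib_left sum_distrib_right mult_ac)
  finally have "((\<lambda>t. complex_of_real ((cmod (S t))\<^sup>2)) has_integral
      complex_of_real (2*pi * (\<Sum>n<K. (cmod (c n))\<^sup>2))) {0..2*pi}"
    unfolding sq .
  from has_integral_linear[OF this bounded_linear_Re]
  show ?thesis unfolding S_def by (simp add: o_def)
qed

definition circle_sq_mean :: "(complex \<Rightarrow> complex) \<Rightarrow> real \<Rightarrow> ennreal" where
  "circle_sq_mean F r =
    (\<integral>\<^sup>+ t. ennreal (indicator {0..2*pi} t * ((cmod (F (of_real r * cis t)))\<^sup>2 / (2*pi))) \<partial>lborel)"

lemma circle_sq_mean_const: "circle_sq_mean (\<lambda>_. c) r = ennreal ((cmod c)\<^sup>2)"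
  using nn_integral_has_integral_lebesgue[OF _ has_integral_const_real[of "(cmod c)\<^sup>2 / (2*pi)" 0 "2*pi"]]
  by (simp add: circle_sq_mean_def)

lemma measurable_circle_comp:
  assumes "F holomorphic_on ball 0 1" and "0 \<le> r" "r < 1"
  shows "(\<lambda>t. F (of_real r * cis t)) \<in> borel_measurable borel"
proof (rule borel_measurable_continuous_onI)
  have "continuous_on (ball 0 1) F"
    using assms(1) by (rule holomorphic_on_imp_continuous_on)
  moreover have "(\<lambda>t. of_real r * cis t) ` UNIV \<subseteq> ball 0 1"
    using assms(2,3) by (auto simp: norm_mult)
  ultimately show "continuous_on UNIV (\<lambda>t. F (of_real r * cis t))"
    by (intro continuous_on_compose2[of "ball 0 1" F UNIV] continuous_intros)
qed

lemma circle_sq_mean_tendsto: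
  assumes F: "\<And>K. F K holomorphic_on ball 0 1" and G: "G holomorphic_on ball 0 1"
    and r: "0 \<le> r" "r < 1"
    and bound: "\<And>K t. cmod (F K (of_real r * cis t)) \<le> A"
    and lim: "\<And>t. (\<lambda>K. F K (of_real r * cis t)) \<longlonglongrightarrow> G (of_real r * cis t)"
  shows "(\<lambda>K. circle_sq_mean (F K) r) \<longlonglongrightarrow> circle_sq_mean G r"
  unfolding circle_sq_mean_def
proof (rule nn_integral_dominated_convergence[where w = "\<lambda>t. ennreal (indicator {0..2*pi} t * (A\<^sup>2 / (2*pi)))"])
  note [measurable] = measurable_circle_comp[OF F r] measurable_circle_comp[OF G r]
  show "(\<lambda>t. ennreal (indicator {0..2*pi} t * ((cmod (F K (of_real r * cis t)))\<^sup>2 / (2*pi))))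
      \<in> borel_measurable lborel" for K
    by measurable
  show "(\<lambda>t. ennreal (indicator {0..2*pi} t * ((cmod (G (of_real r * cis t)))\<^sup>2 / (2*pi))))
      \<in> borel_measurable lborel"
    by measurable
  show "AE t in lborel. ennreal (indicator {0..2*pi} t * ((cmod (F K (of_real r * cis t)))\<^sup>2 / (2*pi)))
      \<le> ennreal (indicator {0..2*pi} t * (A\<^sup>2 / (2*pi)))" for K
  proof (rule AE_I2)
    fix t
    have "(cmod (F K (of_real r * cis t)))\<^sup>2 \<le> A\<^sup>2"
      using bound[of K t] by (intro power_mono) auto
    then show "ennreal (indicator {0..2*pi} t * ((cmod (F K (of_real r * cis t)))\<^sup>2 / (2*pi)))
        \<le> ennreal (indicator {0..2*pi} t * (A\<^sup>2 / (2*pi)))"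
      by (intro ennreal_leI) (auto simp: indicator_def divide_right_mono)
  qed
  show "(\<integral>\<^sup>+ t. ennreal (indicator {0..2*pi} t * (A\<^sup>2 / (2*pi))) \<partial>lborel) < \<infinity>"
    using circle_sq_mean_const[of A r] by (simp add: circle_sq_mean_def)
  show "AE t in lborel. (\<lambda>K. ennreal (indicator {0..2*pi} t * ((cmod (F K (of_real r * cis t)))\<^sup>2 / (2*pi))))
      \<longlonglongrightarrow> ennreal (indicator {0..2*pi} t * ((cmod (G (of_real r * cis t)))\<^sup>2 / (2*pi)))"
    by (intro AE_I2 tendsto_ennrealI tendsto_intros lim) auto
qed measurable

lemma circle_sq_mean_poly_sum:
  assumes "0 \<le> r"
  shows "circle_sq_mean (\<lambda>z. \<Sum>n<K. a n * z ^ n) r = ennreal (\<Sum>n<K. (cmod (a n))\<^sup>2 * (r\<^sup>2) ^ n)"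
proof -
  have "(\<Sum>n<K. a n * (of_real r * cis t) ^ n) = (\<Sum>n<K. (a n * of_real (r ^ n)) * cis (real n * t))" for t
    by (simp add: power_mult_distrib Complex.DeMoivre mult_ac)
  moreover have "(cmod (a n * of_real (r ^ n)))\<^sup>2 = (cmod (a n))\<^sup>2 * (r\<^sup>2) ^ n" for n
    using assms by (simp add: norm_mult norm_power power_mult_distrib mult.commute flip: power_mult)
  moreover have "((\<lambda>t. (cmod (\<Sum>n<K. (a n * of_real (r ^ n)) * cis (real n * t)))\<^sup>2 / (2*pi))
      has_integral (2*pi * (\<Sum>n<K. (cmod (a n * of_real (r ^ n)))\<^sup>2)) / (2*pi)) {0..2*pi}"
    by (intro has_integral_divide has_integral_norm_sq_trig_sum)
  ultimately have "((\<lambda>t. (cmod (\<Sum>n<K. a n * (of_real r * cis t) ^ n))\<^sup>2 / (2*pi))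
      has_integral (\<Sum>n<K. (cmod (a n))\<^sup>2 * (r\<^sup>2) ^ n)) {0..2*pi}"
    by simp
  then show ?thesis
    unfolding circle_sq_mean_def by (rule nn_integral_has_integral_lebesgue[rotated]) simp
qed

lemma taylor_coeff_sums:
  assumes "F holomorphic_on ball 0 1" and "z \<in> ball 0 1"
  shows "(\<lambda>n. taylor_coeff F n * z ^ n) sums F z"
  using holomorphic_power_series[OF assms] by (simp add: taylor_coeff_def)

lemma summable_taylor_coeff_norm:
  assumes F: "F holomorphic_on ball 0 1" and r: "0 \<le> r" "r < 1"
  shows "summable (\<lambda>n. cmod (taylor_coeff F n) * r ^ n)"
proof -
  have "of_real ((1 + r) / 2) \<in> ball (0::complex) 1"
    unfolding mem_ball_0 norm_of_real using r by auto
  then have "summable (\<lambda>n. taylor_coeff F n * of_real ((1 + r) / 2) ^ n)"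
    by (intro sums_summable[OF taylor_coeff_sums[OF F]])
  moreover have "norm (of_real r :: complex) < norm (of_real ((1 + r) / 2) :: complex)"
    unfolding norm_of_real using r by auto
  ultimately show ?thesis
    using powser_insidea r by (fastforce simp: norm_mult norm_power)
qed

lemma coeff_sq_series_eq_circle_sq_mean:
  assumes F: "F holomorphic_on ball 0 1" and s: "0 \<le> s" "s < 1"
  shows "coeff_sq_series F s = circle_sq_mean F (sqrt s)"
proof -
  define r where "r = sqrt s"
  have r: "0 \<le> r" "r < 1"
    using s by (auto simp: r_def real_sqrt_lt_1_iff)
  define a where "a n = taylor_coeff F n" for n
  define S where "S K z = (\<Sum>n<K. a n * z ^ n)" for K z
  have summable: "summable (\<lambda>n. cmod (a n) * r ^ n)"
    unfolding a_def by (rule summable_taylor_coeff_norm[OF F r])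
  define A where "A = (\<Sum>n. cmod (a n) * r ^ n)"
  have "cmod (S K (of_real r * cis t)) \<le> A" for K t
  proof -
    have "cmod (S K (of_real r * cis t)) \<le> (\<Sum>n<K. cmod (a n) * r ^ n)"
      unfolding S_def using r by (auto intro!: order.trans[OF norm_sum] simp: norm_mult norm_power)
    also have "\<dots> \<le> A"
      unfolding A_def using r by (intro sum_le_suminf[OF summable]) auto
    finally show ?thesis .
  qed
  moreover have "(\<lambda>K. S K (of_real r * cis t)) \<longlonglongrightarrow> F (of_real r * cis t)" for t
    using taylor_coeff_sums[OF F, of "of_real r * cis t"] r
    unfolding S_def a_def sums_def by (simp add: norm_mult)
  moreover have "S K holomorphic_on ball 0 1" for K
    unfolding S_def by (intro holomorphic_intros)
  ultimately have "(\<lambda>K. circle_sq_mean (S K) r) \<longlonglongrightarrow> circle_sq_mean F r"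
    using circle_sq_mean_tendsto[OF _ F r] by blast
  moreover have "circle_sq_mean (S K) r = ennreal (\<Sum>n<K. (cmod (a n))\<^sup>2 * s ^ n)" for K
    unfolding S_def using circle_sq_mean_poly_sum[OF r(1)] s by (simp add: r_def)
  moreover have "(\<lambda>K. ennreal (\<Sum>n<K. (cmod (a n))\<^sup>2 * s ^ n)) \<longlonglongrightarrow> coeff_sq_series F s"
    unfolding coeff_sq_series_def a_def using s
    by (simp add: summable_LIMSEQ flip: sum_ennreal)
  ultimately show ?thesis
    unfolding r_def using LIMSEQ_unique by fastforce
qed

section \<open>Comparison and dominated convergence in \<open>A\<^sup>2\<^sub>\<beta>\<close>\<close>

lemma circle_sq_mean_le:
  assumes G1: "G1 holomorphic_on ball 0 1" and G2: "G2 holomorphic_on ball 0 1"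
    and ab: "0 \<le> a" "0 \<le> b" and r: "0 \<le> r" "r < 1"
    and le: "\<And>z. z \<in> ball 0 1 \<Longrightarrow> (cmod (F z))\<^sup>2 \<le> a * (cmod (G1 z))\<^sup>2 + b * (cmod (G2 z))\<^sup>2"
  shows "circle_sq_mean F r \<le> ennreal a * circle_sq_mean G1 r + ennreal b * circle_sq_mean G2 r"
proof -
  let ?m = "\<lambda>G t. ennreal (indicator {0..2*pi} t * ((cmod (G (of_real r * cis t)))\<^sup>2 / (2*pi)))"
  note [measurable] = measurable_circle_comp[OF G1 r] measurable_circle_comp[OF G2 r]
  have "circle_sq_mean F r \<le> (\<integral>\<^sup>+ t. ennreal a * ?m G1 t + ennreal b * ?m G2 t \<partial>lborel)"
    unfolding circle_sq_mean_def
  proof (rule nn_integral_mono)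
    fix t :: real
    have "of_real r * cis t \<in> ball 0 1"
      using r by (simp add: norm_mult)
    from le[OF this] have "indicator {0..2*pi} t * ((cmod (F (of_real r * cis t)))\<^sup>2 / (2*pi))
       \<le> a * (indicator {0..2*pi} t * ((cmod (G1 (of_real r * cis t)))\<^sup>2 / (2*pi)))
         + b * (indicator {0..2*pi} t * ((cmod (G2 (of_real r * cis t)))\<^sup>2 / (2*pi)))"
      by (auto simp: indicator_def add_divide_distrib[symmetric] intro!: divide_right_mono)
    then show "?m F t \<le> ennreal a * ?m G1 t + ennreal b * ?m G2 t"
      using ab by (simp add: ennreal_mult'[symmetric] ennreal_plus[symmetric] del: ennreal_plus)
  qed
  also have "\<dots> = ennreal a * circle_sq_mean G1 r + ennreal b * circle_sq_mean G2 r"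
  proof -
    have "?m G1 \<in> borel_measurable lborel" by measurable
    moreover have "?m G2 \<in> borel_measurable lborel" by measurable
    ultimately show ?thesis
      unfolding circle_sq_mean_def by (simp add: nn_integral_add nn_integral_cmult)
  qed
  finally show ?thesis .
qed

lemma coeff_sq_series_le:
  assumes "F holomorphic_on ball 0 1" "G1 holomorphic_on ball 0 1" "G2 holomorphic_on ball 0 1"
    and "0 \<le> a" "0 \<le> b" and "0 \<le> s" "s < 1"
    and "\<And>z. z \<in> ball 0 1 \<Longrightarrow> (cmod (F z))\<^sup>2 \<le> a * (cmod (G1 z))\<^sup>2 + b * (cmod (G2 z))\<^sup>2"
  shows "coeff_sq_series F s \<le> ennreal a * coeff_sq_series G1 s + ennreal b * coeff_sq_series G2 s"
  using circle_sq_mean_le[OF assms(2-5) _ _ assms(8), of "sqrt s"] assms(6,7)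
  by (simp add: coeff_sq_series_eq_circle_sq_mean assms(1-3) real_sqrt_lt_1_iff)

lemma A2_energy_le:
  assumes "\<beta> > -1"
    and F: "F holomorphic_on ball 0 1" and G1: "G1 holomorphic_on ball 0 1"
    and G2: "G2 holomorphic_on ball 0 1" and ab: "0 \<le> a" "0 \<le> b"
    and le: "\<And>z. z \<in> ball 0 1 \<Longrightarrow> (cmod (F z))\<^sup>2 \<le> a * (cmod (G1 z))\<^sup>2 + b * (cmod (G2 z))\<^sup>2"
  shows "A2_energy \<beta> F \<le> ennreal a * A2_energy \<beta> G1 + ennreal b * A2_energy \<beta> G2"
proof -
  define W where "W s = ennreal (indicator {0<..<1} s * bergman_density \<beta> s)" for s
  have [measurable]: "W \<in> borel_measurable borel"
    unfolding W_def by measurable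
  have "A2_energy \<beta> F = (\<integral>\<^sup>+ s. W s * coeff_sq_series F s \<partial>lborel)"
    unfolding W_def by (rule A2_energy_eq_nn_integral[OF assms(1)])
  also have "\<dots> \<le> (\<integral>\<^sup>+ s. ennreal a * (W s * coeff_sq_series G1 s)
      + ennreal b * (W s * coeff_sq_series G2 s) \<partial>lborel)"
  proof (rule nn_integral_mono)
    fix s :: real
    show "W s * coeff_sq_series F s
        \<le> ennreal a * (W s * coeff_sq_series G1 s) + ennreal b * (W s * coeff_sq_series G2 s)"
    proof (cases "s \<in> {0<..<1}")
      case True
      have "W s * coeff_sq_series F s
          \<le> W s * (ennreal a * coeff_sq_series G1 s + ennreal b * coeff_sq_series G2 s)"
        using True by (intro mult_left_mono coeff_sq_series_le[OF F G1 G2 ab _ _ le]) auto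
      then show ?thesis
        by (simp add: distrib_left mult_ac)
    qed (simp add: W_def)
  qed
  also have "\<dots> = ennreal a * A2_energy \<beta> G1 + ennreal b * A2_energy \<beta> G2"
    unfolding A2_energy_eq_nn_integral[OF assms(1)] W_def[symmetric]
    by (simp add: nn_integral_add nn_integral_cmult)
  finally show ?thesis .
qed

lemma A2_energy_le_mult:
  assumes "\<beta> > -1" "F holomorphic_on ball 0 1" "G holomorphic_on ball 0 1" "0 \<le> M"
    and "\<And>z. z \<in> ball 0 1 \<Longrightarrow> cmod (F z) \<le> M * cmod (G z)"
  shows "A2_energy \<beta> F \<le> ennreal (M\<^sup>2) * A2_energy \<beta> G"
proof -
  have "(cmod (F z))\<^sup>2 \<le> M\<^sup>2 * (cmod (G z))\<^sup>2 + 0 * (cmod (G z))\<^sup>2" if "z \<in> ball 0 1" for z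
    using power_mono[OF assms(5)[OF that] norm_ge_zero, of 2] by (simp add: power_mult_distrib)
  from A2_energy_le[OF assms(1-3) assms(3) _ _ this] show ?thesis
    by simp
qed

lemma norm_add_sq_le:
  fixes x y :: "'a::real_normed_vector"
  shows "(norm (x + y))\<^sup>2 \<le> 2 * (norm x)\<^sup>2 + 2 * (norm y)\<^sup>2"
proof -
  have "(norm (x + y))\<^sup>2 \<le> (norm x + norm y)\<^sup>2"
    by (intro power_mono norm_triangle_ineq) auto
  also have "\<dots> \<le> 2 * (norm x)\<^sup>2 + 2 * (norm y)\<^sup>2"
    using sum_squares_ge_zero[of "norm x - norm y" 0] by (simp add: power2_eq_square algebra_simps)
  finally show ?thesis .
qed

lemma A2_energy_add_le:
  assumes "\<beta> > -1" "F holomorphic_on ball 0 1" "G holomorphic_on ball 0 1"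
  shows "A2_energy \<beta> (\<lambda>z. F z + G z) \<le> 2 * A2_energy \<beta> F + 2 * A2_energy \<beta> G"
  using A2_energy_le[OF assms(1) _ assms(2,3), of _ 2 2] assms(2,3)
  by (simp add: norm_add_sq_le holomorphic_on_add)

lemma A2_diff:
  assumes "\<beta> > -1" "F \<in> A2 \<beta>" "G \<in> A2 \<beta>"
  shows "(\<lambda>z. F z - G z) \<in> A2 \<beta>"
proof -
  have hol: "F holomorphic_on ball 0 1" "G holomorphic_on ball 0 1"
    and fin: "A2_energy \<beta> F < \<infinity>" "A2_energy \<beta> G < \<infinity>"
    using assms A2_iff_energy_finite by blast+
  have "(cmod (F z - G z))\<^sup>2 \<le> 2 * (cmod (F z))\<^sup>2 + 2 * (cmod (G z))\<^sup>2" for z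
    using norm_add_sq_le[of "F z" "- G z"] by simp
  then have "A2_energy \<beta> (\<lambda>z. F z - G z) \<le> 2 * A2_energy \<beta> F + 2 * A2_energy \<beta> G"
    using A2_energy_le[OF assms(1) _ hol, of _ 2 2] hol by (simp add: holomorphic_on_diff)
  also have "\<dots> < \<infinity>"
    using fin by (simp add: ennreal_mult_less_top)
  finally show ?thesis
    using A2_iff_energy_finite[OF assms(1)] hol by (blast intro: holomorphic_on_diff)
qed

lemma A2_mult_bounded:
  assumes "\<beta> > -1" "F \<in> A2 \<beta>" "v holomorphic_on ball 0 1"
    and bound: "\<And>z. z \<in> ball 0 1 \<Longrightarrow> cmod (v z) \<le> M"
  shows "(\<lambda>z. v z * F z) \<in> A2 \<beta>"
proof -
  have F: "F holomorphic_on ball 0 1" and fin: "A2_energy \<beta> F < \<infinity>"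
    using assms(1,2) A2_iff_energy_finite by blast+
  have vF: "(\<lambda>z. v z * F z) holomorphic_on ball 0 1"
    using assms(3) F by (rule holomorphic_on_mult)
  have "0 \<le> M"
    using order_trans[OF norm_ge_zero bound[of 0]] by simp
  then have "A2_energy \<beta> (\<lambda>z. v z * F z) \<le> ennreal (M\<^sup>2) * A2_energy \<beta> F"
    by (intro A2_energy_le_mult[OF assms(1) vF F]) (auto simp: norm_mult intro!: mult_right_mono bound)
  also have "\<dots> < \<infinity>"
    using fin by (simp add: ennreal_mult_less_top)
  finally show ?thesis
    using A2_iff_energy_finite[OF assms(1)] vF by blast
qed

lemma coeff_sq_series_mult_tendsto_zero:
  assumes F: "F holomorphic_on ball 0 1"
    and v: "\<And>N. v N holomorphic_on ball 0 1"
    and bound: "\<And>N z. z \<in> ball 0 1 \<Longrightarrow> cmod (v N z) \<le> M"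
    and lim: "\<And>z. z \<in> ball 0 1 \<Longrightarrow> (\<lambda>N. v N z) \<longlonglongrightarrow> 0"
    and s: "0 \<le> s" "s < 1"
  shows "(\<lambda>N. coeff_sq_series (\<lambda>z. v N z * F z) s) \<longlonglongrightarrow> 0"
proof -
  define r where "r = sqrt s"
  have r: "0 \<le> r" "r < 1"
    using s by (auto simp: r_def real_sqrt_lt_1_iff)
  have circle: "of_real r * cis t \<in> cball 0 r \<inter> ball 0 1" for t
    using r by (simp add: norm_mult)
  have "compact (F ` cball 0 r)"
    using r by (intro compact_continuous_image holomorphic_on_imp_continuous_on
        holomorphic_on_subset[OF F]) auto
  then obtain B where B: "\<And>w. w \<in> cball 0 r \<Longrightarrow> cmod (F w) \<le> B"
    unfolding bounded_iff[symmetric] by (meson compact_imp_bounded image_eqI bounded_iff)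
  have vF: "(\<lambda>w. v N w * F w) holomorphic_on ball 0 1" for N
    by (intro holomorphic_on_mult v F)
  have "(\<lambda>N. circle_sq_mean (\<lambda>w. v N w * F w) r) \<longlonglongrightarrow> circle_sq_mean (\<lambda>_. 0) r"
  proof (rule circle_sq_mean_tendsto[OF vF _ r])
    show "cmod (v N (of_real r * cis t) * F (of_real r * cis t)) \<le> M * B" for N t
      using circle[of t] order_trans[OF norm_ge_zero bound[of 0 N]]
      unfolding norm_mult by (intro mult_mono bound B) auto
    show "(\<lambda>N. v N (of_real r * cis t) * F (of_real r * cis t)) \<longlonglongrightarrow> 0" for t
      using circle[of t] by (intro tendsto_mult_left_zero lim) auto
  qed auto
  then show ?thesis
    using coeff_sq_series_eq_circle_sq_mean[OF vF s] circle_sq_mean_const[of 0 r]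
    by (simp add: r_def)
qed

lemma A2_energy_mult_tendsto_zero:
  assumes "\<beta> > -1" and F: "F \<in> A2 \<beta>"
    and v: "\<And>N. v N holomorphic_on ball 0 1"
    and bound: "\<And>N z. z \<in> ball 0 1 \<Longrightarrow> cmod (v N z) \<le> M"
    and lim: "\<And>z. z \<in> ball 0 1 \<Longrightarrow> (\<lambda>N. v N z) \<longlonglongrightarrow> 0"
  shows "(\<lambda>N. A2_energy \<beta> (\<lambda>z. v N z * F z)) \<longlonglongrightarrow> 0"
proof -
  define W where "W s = ennreal (indicator {0<..<1} s * bergman_density \<beta> s)" for s
  have [measurable]: "W \<in> borel_measurable borel"
    unfolding W_def by measurable
  have Fh: "F holomorphic_on ball 0 1" and fin: "A2_energy \<beta> F < \<infinity>"
    using assms(1) F A2_iff_energy_finite by blast+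
  have M: "0 \<le> M"
    using order_trans[OF norm_ge_zero bound[of 0 0]] by simp
  have "(\<lambda>N. \<integral>\<^sup>+ s. W s * coeff_sq_series (\<lambda>z. v N z * F z) s \<partial>lborel)
      \<longlonglongrightarrow> (\<integral>\<^sup>+ s. W s * 0 \<partial>lborel)"
  proof (rule nn_integral_dominated_convergence[where w = "\<lambda>s. ennreal (M\<^sup>2) * (W s * coeff_sq_series F s)"])
    show "AE s in lborel. W s * coeff_sq_series (\<lambda>z. v N z * F z) s
        \<le> ennreal (M\<^sup>2) * (W s * coeff_sq_series F s)" for N
    proof (rule AE_I2)
      fix s :: real
      show "W s * coeff_sq_series (\<lambda>z. v N z * F z) s \<le> ennreal (M\<^sup>2) * (W s * coeff_sq_series F s)"
      proof (cases "s \<in> {0<..<1}")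
        case True
        have "(cmod (v N z * F z))\<^sup>2 \<le> M\<^sup>2 * (cmod (F z))\<^sup>2 + 0 * (cmod (F z))\<^sup>2"
          if "z \<in> ball 0 1" for z
        proof -
          have "cmod (v N z * F z) \<le> M * cmod (F z)"
            unfolding norm_mult by (intro mult_right_mono bound that) simp
          from power_mono[OF this norm_ge_zero, of 2] show ?thesis
            by (simp add: power_mult_distrib)
        qed
        then have "coeff_sq_series (\<lambda>z. v N z * F z) s \<le> ennreal (M\<^sup>2) * coeff_sq_series F s"
          using coeff_sq_series_le[OF holomorphic_on_mult[OF v Fh] Fh Fh, of "M\<^sup>2" 0 s] True
          by simp
        then show ?thesis
          by (simp add: mult_left_mono mult.left_commute)
      qed (simp add: W_def)
    qed
    show "(\<integral>\<^sup>+ s. ennreal (M\<^sup>2) * (W s * coeff_sq_series F s) \<partial>lborel) < \<infinity>"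
      using fin by (simp add: nn_integral_cmult W_def A2_energy_eq_nn_integral[OF assms(1), symmetric]
          ennreal_mult_less_top)
    show "AE s in lborel. (\<lambda>N. W s * coeff_sq_series (\<lambda>z. v N z * F z) s) \<longlonglongrightarrow> W s * 0"
    proof (rule AE_I2)
      fix s :: real
      show "(\<lambda>N. W s * coeff_sq_series (\<lambda>z. v N z * F z) s) \<longlonglongrightarrow> W s * 0"
      proof (cases "s \<in> {0<..<1}")
        case True
        then have "(\<lambda>N. coeff_sq_series (\<lambda>z. v N z * F z) s) \<longlonglongrightarrow> 0"
          by (intro coeff_sq_series_mult_tendsto_zero[OF Fh v bound lim]) auto
        then show ?thesis
          by (intro ennreal_tendsto_cmult) (auto simp: W_def)
      qed (simp add: W_def)
    qed
  qed measurable
  then show ?thesis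
    unfolding A2_energy_eq_nn_integral[OF assms(1)] W_def by simp
qed

lemma taylor_coeff_cong:
  assumes "\<And>z. z \<in> ball 0 1 \<Longrightarrow> F z = G z"
  shows "taylor_coeff F n = taylor_coeff G n"
proof -
  have "eventually (\<lambda>z. F z = G z) (nhds 0)"
    unfolding eventually_nhds by (intro exI[of _ "ball 0 1"]) (use assms in auto)
  then show ?thesis
    unfolding taylor_coeff_def using higher_deriv_cong_ev[of F G 0 0 n] by simp
qed

lemma A2_energy_cong:
  assumes "\<And>z. z \<in> ball 0 1 \<Longrightarrow> F z = G z"
  shows "A2_energy \<beta> F = A2_energy \<beta> G"
  unfolding A2_energy_def using taylor_coeff_cong[OF assms] by simp

section \<open>The closure of the range of \<open>C\<^sub>\<phi> - \<lambda>I\<close>\<close>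

lemma holomorphic_on_compose_self_map:
  assumes "self_map_disc \<phi>" and "h holomorphic_on ball 0 1"
  shows "(\<lambda>z. h (\<phi> z)) holomorphic_on ball 0 1"
  using assms holomorphic_on_compose_gen[of \<phi> "ball 0 1" h "ball 0 1"]
  unfolding self_map_disc_def by (simp add: o_def)

lemma self_map_disc_funpow:
  assumes "self_map_disc \<phi>"
  shows "self_map_disc (\<phi> ^^ n)"
proof (induction n)
  case 0
  then show ?case
    by (simp add: self_map_disc_def holomorphic_on_id id_def)
next
  case (Suc n)
  then show ?case
    using assms unfolding self_map_disc_def funpow.simps
    by (auto intro: holomorphic_on_compose_gen)
qed

lemma sum_funpow_shift:
  fixes u :: "'a \<Rightarrow> 'b::ab_group_add"
  shows "(\<Sum>k<N. u ((\<phi> ^^ k) (\<phi> z))) = (\<Sum>k<N. u ((\<phi> ^^ k) z)) + u ((\<phi> ^^ N) z) - u z"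
  by (induction N) (simp_all add: funpow_swap1 algebra_simps)

lemma poly_bounded_on_compact:
  fixes p :: "'a::{real_normed_field,heine_borel} poly"
  assumes "compact S"
  obtains M where "\<And>z. z \<in> S \<Longrightarrow> norm (poly p z) \<le> M"
proof -
  have "compact (poly p ` S)"
    using assms by (intro compact_continuous_image continuous_intros)
  then show ?thesis
    using that compact_imp_bounded bounded_iff by (metis image_eqI)
qed

text \<open>If \<open>\<lambda> = 0\<close>, then \<open>f\<close> vanishes on \<open>\<phi>(\<DD>)\<close>, which is open unless \<open>\<phi>\<close> is constant;
  a constant \<open>\<phi>\<close> would have its value, an interior point, as Denjoy--Wolff point.\<close>
lemma comp_eigenvalue_nonzero:
  assumes dw: "denjoy_wolff_point \<phi> \<omega>" and "cmod \<omega> = 1"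
    and f: "f holomorphic_on ball 0 1" and nz: "\<exists>z\<in>ball 0 1. f z \<noteq> 0"
    and eig: "\<And>z. z \<in> ball 0 1 \<Longrightarrow> f (\<phi> z) = lam * f z"
  shows "lam \<noteq> 0"
proof
  assume "lam = 0"
  have ph: "\<phi> holomorphic_on ball 0 1" and pb: "\<phi> ` ball 0 1 \<subseteq> ball 0 1"
    and lim: "(\<lambda>n. (\<phi> ^^ n) 0) \<longlonglongrightarrow> \<omega>"
    using dw unfolding denjoy_wolff_point_def self_map_disc_def by auto
  show False
  proof (cases "\<phi> constant_on ball 0 1")
    case True
    then obtain c where c: "\<And>z. z \<in> ball 0 1 \<Longrightarrow> \<phi> z = c"
      unfolding constant_on_def by blast
    have "c \<in> ball 0 1"
      using c[of 0] pb by force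
    then have "(\<phi> ^^ Suc n) 0 = c" for n
      by (induction n) (simp_all add: c)
    then have "(\<lambda>n. (\<phi> ^^ Suc n) 0) \<longlonglongrightarrow> c"
      by simp
    with LIMSEQ_Suc[OF lim] have "\<omega> = c"
      by (rule LIMSEQ_unique)
    with \<open>c \<in> ball 0 1\<close> \<open>cmod \<omega> = 1\<close> show False
      by simp
  next
    case False
    have "open (\<phi> ` ball 0 1)"
      by (rule open_mapping_thm[OF ph _ _ _ _ False]) auto
    have "f z = 0" if "z \<in> ball 0 1" for z
    proof (rule analytic_continuation_open[of "\<phi> ` ball 0 1" "ball 0 1" f "\<lambda>_. 0"])
      show "\<And>w. w \<in> \<phi> ` ball 0 1 \<Longrightarrow> f w = 0"
        using eig \<open>lam = 0\<close> by auto
    qed (use \<open>open (\<phi> ` ball 0 1)\<close> pb f that in auto)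
    with nz show False
      by auto
  qed
qed

definition in_range_closure ::
    "real \<Rightarrow> (complex \<Rightarrow> complex) \<Rightarrow> complex \<Rightarrow> (complex \<Rightarrow> complex) \<Rightarrow> bool" where
  "in_range_closure \<beta> \<phi> lam F \<longleftrightarrow>
     (\<forall>\<delta>>0. \<exists>h\<in>A2 \<beta>. A2_energy \<beta> (\<lambda>z. h (\<phi> z) - lam * h z - F z) < ennreal \<delta>)"

lemma in_range_closure_approx:
  assumes "\<beta> > -1" and sm: "self_map_disc \<phi>" and F: "F holomorphic_on ball 0 1"
    and approx: "\<And>\<delta>. \<delta> > 0 \<Longrightarrow> \<exists>F'. F' holomorphic_on ball 0 1 \<and> in_range_closure \<beta> \<phi> lam F' \<and>
                       A2_energy \<beta> (\<lambda>z. F' z - F z) < ennreal \<delta>"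
  shows "in_range_closure \<beta> \<phi> lam F"
  unfolding in_range_closure_def
proof (intro allI impI)
  fix \<delta> :: real
  assume "\<delta> > 0"
  then obtain F' where F': "F' holomorphic_on ball 0 1" "in_range_closure \<beta> \<phi> lam F'"
      and close: "A2_energy \<beta> (\<lambda>z. F' z - F z) < ennreal (\<delta>/4)"
    using approx[of "\<delta>/4"] by auto
  then obtain h where h: "h \<in> A2 \<beta>"
      and hF': "A2_energy \<beta> (\<lambda>z. h (\<phi> z) - lam * h z - F' z) < ennreal (\<delta>/4)"
    using \<open>\<delta> > 0\<close> unfolding in_range_closure_def by (meson zero_less_divide_iff zero_less_numeral)
  have hh: "h holomorphic_on ball 0 1"
    using h unfolding A2_def by auto
  have "(\<lambda>z. h (\<phi> z)) holomorphic_on ball 0 1"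
    by (rule holomorphic_on_compose_self_map[OF sm hh])
  then have X: "(\<lambda>z. h (\<phi> z) - lam * h z - F' z) holomorphic_on ball 0 1"
    by (intro holomorphic_intros hh F'(1))
  have Y: "(\<lambda>z. F' z - F z) holomorphic_on ball 0 1"
    by (intro holomorphic_intros F F'(1))
  have "A2_energy \<beta> (\<lambda>z. h (\<phi> z) - lam * h z - F z)
      = A2_energy \<beta> (\<lambda>z. (h (\<phi> z) - lam * h z - F' z) + (F' z - F z))"
    by (intro arg_cong[where f = "A2_energy \<beta>"] ext) simp
  also have "\<dots> \<le> 2 * A2_energy \<beta> (\<lambda>z. h (\<phi> z) - lam * h z - F' z) + 2 * A2_energy \<beta> (\<lambda>z. F' z - F z)"
    by (rule A2_energy_add_le[OF assms(1) X Y])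
  also have "\<dots> < ennreal (\<delta>/4 + \<delta>/4 + (\<delta>/4 + \<delta>/4))"
    unfolding mult_2 by (intro add_mono_ennreal hF' close)
  finally show "\<exists>h\<in>A2 \<beta>. A2_energy \<beta> (\<lambda>z. h (\<phi> z) - lam * h z - F z) < ennreal \<delta>"
    using h by auto
qed

lemma comp_minus_eigen_telescope:
  fixes f u :: "'a \<Rightarrow> 'b::field" and N :: nat
  assumes "f (\<phi> z) = lam * f z" and "lam \<noteq> 0"
  defines "h \<equiv> \<lambda>w. - (inverse lam * (\<Sum>k<N. u ((\<phi> ^^ k) w))) * f w"
  shows "h (\<phi> z) - lam * h z = (u z - u ((\<phi> ^^ N) z)) * f z"
proof -
  have "h (\<phi> z) = - (\<Sum>k<N. u ((\<phi> ^^ k) (\<phi> z))) * f z" and "lam * h z = - (\<Sum>k<N. u ((\<phi> ^^ k) z)) * f z"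
    using assms by (simp_all add: h_def)
  then show ?thesis
    unfolding sum_funpow_shift by (simp add: algebra_simps)
qed

lemma A2_energy_poly_funpow_tendsto:
  assumes "\<beta> > -1" and dw: "denjoy_wolff_point \<phi> \<omega>" and f: "f \<in> A2 \<beta>"
  shows "(\<lambda>N. A2_energy \<beta> (\<lambda>z. (poly Q \<omega> - poly Q ((\<phi> ^^ N) z)) * f z)) \<longlonglongrightarrow> 0"
proof -
  have \<omega>: "\<omega> \<in> cball 0 1" and lim: "\<And>z. z \<in> ball 0 1 \<Longrightarrow> (\<lambda>N. (\<phi> ^^ N) z) \<longlonglongrightarrow> \<omega>"
    and iter: "\<And>N. self_map_disc (\<phi> ^^ N)"
    using dw self_map_disc_funpow unfolding denjoy_wolff_point_def by auto
  obtain M where M: "\<And>z. z \<in> cball 0 1 \<Longrightarrow> cmod (poly Q z) \<le> M"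
    using poly_bounded_on_compact[of "cball 0 1" Q] by auto
  show ?thesis
  proof (rule A2_energy_mult_tendsto_zero[OF assms(1) f])
    show "(\<lambda>z. poly Q \<omega> - poly Q ((\<phi> ^^ N) z)) holomorphic_on ball 0 1" for N
      using iter unfolding self_map_disc_def by (auto intro!: holomorphic_intros)
    show "cmod (poly Q \<omega> - poly Q ((\<phi> ^^ N) z)) \<le> M + M" if "z \<in> ball 0 1" for N z
    proof -
      have "(\<phi> ^^ N) z \<in> cball 0 1"
        using iter[of N] that ball_subset_cball unfolding self_map_disc_def by blast
      then show ?thesis
        using M[OF \<omega>] M norm_triangle_ineq4 by (smt (verit))
    qed
    show "(\<lambda>N. poly Q \<omega> - poly Q ((\<phi> ^^ N) z)) \<longlonglongrightarrow> 0" if "z \<in> ball 0 1" for z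
      using tendsto_diff[OF tendsto_const tendsto_poly[OF lim[OF that]], of "poly Q \<omega>" Q] by simp
  qed
qed

lemma in_range_closure_poly_minus_DW_value:
  assumes "\<beta> > -1" and dw: "denjoy_wolff_point \<phi> \<omega>"
    and f: "f \<in> A2 \<beta>" and eig: "\<And>z. z \<in> ball 0 1 \<Longrightarrow> f (\<phi> z) = lam * f z" and "lam \<noteq> 0"
  shows "in_range_closure \<beta> \<phi> lam (\<lambda>z. (poly Q z - poly Q \<omega>) * f z)"
  unfolding in_range_closure_def
proof (intro allI impI)
  fix \<delta> :: real
  assume "\<delta> > 0"
  from order_tendstoD(2)[OF A2_energy_poly_funpow_tendsto[OF assms(1) dw f], of "ennreal \<delta>" Q] \<open>\<delta> > 0\<close>
  obtain N where N: "A2_energy \<beta> (\<lambda>z. (poly Q \<omega> - poly Q ((\<phi> ^^ N) z)) * f z) < ennreal \<delta>"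
    by (auto simp: eventually_sequentially)
  define h where "h \<equiv> \<lambda>w. - (inverse lam * (\<Sum>k<N. poly Q ((\<phi> ^^ k) w))) * f w"
  have iter: "self_map_disc (\<phi> ^^ k)" for k
    using dw self_map_disc_funpow unfolding denjoy_wolff_point_def by auto
  obtain M where M: "\<And>z. z \<in> cball 0 1 \<Longrightarrow> cmod (poly Q z) \<le> M"
    using poly_bounded_on_compact[of "cball 0 1" Q] by auto
  have "(\<lambda>z. - (inverse lam * (\<Sum>k<N. poly Q ((\<phi> ^^ k) z)))) holomorphic_on ball 0 1"
    using iter unfolding self_map_disc_def by (auto intro!: holomorphic_intros)
  moreover have "cmod (- (inverse lam * (\<Sum>k<N. poly Q ((\<phi> ^^ k) z)))) \<le> cmod (inverse lam) * (N * M)"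
    if "z \<in> ball 0 1" for z
  proof -
    have "(\<phi> ^^ k) z \<in> cball 0 1" for k
      using iter[of k] that ball_subset_cball unfolding self_map_disc_def by blast
    then show ?thesis
      unfolding norm_minus_cancel norm_mult
      using M sum_bounded_above[of "{..<N}" "\<lambda>k. cmod (poly Q ((\<phi> ^^ k) z))" M]
      by (intro mult_left_mono order.trans[OF norm_sum]) auto
  qed
  ultimately have "h \<in> A2 \<beta>"
    unfolding h_def by (rule A2_mult_bounded[OF assms(1) f])
  moreover have "h (\<phi> z) - lam * h z - (poly Q z - poly Q \<omega>) * f z = (poly Q \<omega> - poly Q ((\<phi> ^^ N) z)) * f z"
    if "z \<in> ball 0 1" for z
    using comp_minus_eigen_telescope[where f = f and \<phi> = \<phi> and z = z and N = N and u = "poly Q",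
        OF eig[OF that] \<open>lam \<noteq> 0\<close>]
    unfolding h_def by (simp add: algebra_simps)
  then have "A2_energy \<beta> (\<lambda>z. h (\<phi> z) - lam * h z - (poly Q z - poly Q \<omega>) * f z)
      = A2_energy \<beta> (\<lambda>z. (poly Q \<omega> - poly Q ((\<phi> ^^ N) z)) * f z)"
    by (rule A2_energy_cong)
  ultimately show "\<exists>h\<in>A2 \<beta>. A2_energy \<beta> (\<lambda>z. h (\<phi> z) - lam * h z - (poly Q z - poly Q \<omega>) * f z) < ennreal \<delta>"
    using N by (intro bexI[of _ h]) simp_all
qed

lemma boundary_peak_poly:
  assumes "cmod \<omega> = 1"
  shows "(1 + cnj \<omega> * \<omega>) / 2 = 1" and "z \<in> ball 0 1 \<Longrightarrow> cmod ((1 + cnj \<omega> * z) / 2) < 1"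
proof -
  show "(1 + cnj \<omega> * \<omega>) / 2 = 1"
    using complex_norm_square[of \<omega>] assms by (simp add: mult.commute)
  assume "z \<in> ball 0 1"
  moreover have "cmod (1 + cnj \<omega> * z) \<le> 1 + cmod z"
    using norm_triangle_ineq[of 1 "cnj \<omega> * z"] assms by (simp add: norm_mult)
  ultimately show "cmod ((1 + cnj \<omega> * z) / 2) < 1"
    by (simp add: norm_divide)
qed

lemma A2_energy_peak_power_tendsto:
  assumes "\<beta> > -1" and "cmod \<omega> = 1" and f: "f \<in> A2 \<beta>"
  shows "(\<lambda>k. A2_energy \<beta> (\<lambda>z. c * ((1 + cnj \<omega> * z) / 2) ^ k * f z)) \<longlonglongrightarrow> 0"
proof (rule A2_energy_mult_tendsto_zero[OF assms(1) f])
  show "(\<lambda>z. c * ((1 + cnj \<omega> * z) / 2) ^ k) holomorphic_on ball 0 1" for k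
    by (intro holomorphic_intros) auto
  show "cmod (c * ((1 + cnj \<omega> * z) / 2) ^ k) \<le> cmod c" if "z \<in> ball 0 1" for k z
    using boundary_peak_poly(2)[OF assms(2) that] unfolding norm_mult norm_power
    by (intro mult_left_le power_le_one) auto
  show "(\<lambda>k. c * ((1 + cnj \<omega> * z) / 2) ^ k) \<longlonglongrightarrow> 0" if "z \<in> ball 0 1" for z
    using tendsto_mult_right_zero[OF LIMSEQ_power_zero[OF boundary_peak_poly(2)[OF assms(2) that]], of c]
    by simp
qed

text \<open>With \<open>e(z) = (1 + \<omega>\<^sup>* z)/2\<close>, the polynomials \<open>p - p(\<omega>) e\<^sup>k\<close> vanish at \<open>\<omega>\<close>, and
  \<open>(p - p(\<omega>) e\<^sup>k) f \<rightarrow> p f\<close> because \<open>|e| < 1\<close> on the disc.\<close>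
lemma in_range_closure_poly_mult:
  assumes "\<beta> > -1" and dw: "denjoy_wolff_point \<phi> \<omega>" and "cmod \<omega> = 1"
    and f: "f \<in> A2 \<beta>" and eig: "\<And>z. z \<in> ball 0 1 \<Longrightarrow> f (\<phi> z) = lam * f z" and "lam \<noteq> 0"
  shows "in_range_closure \<beta> \<phi> lam (\<lambda>z. poly p z * f z)"
proof (rule in_range_closure_approx[OF assms(1)])
  show "self_map_disc \<phi>"
    using dw unfolding denjoy_wolff_point_def by simp
  have fh: "f holomorphic_on ball 0 1"
    using f unfolding A2_def by simp
  then show "(\<lambda>z. poly p z * f z) holomorphic_on ball 0 1"
    by (intro holomorphic_intros)
  fix \<delta> :: real
  assume "\<delta> > 0"
  define e where "e z = (1 + cnj \<omega> * z) / 2" for z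
  from order_tendstoD(2)[OF A2_energy_peak_power_tendsto[OF assms(1,3) f, of "- poly p \<omega>"], of "ennreal \<delta>"]
  obtain k where k: "A2_energy \<beta> (\<lambda>z. - poly p \<omega> * e z ^ k * f z) < ennreal \<delta>"
    using \<open>\<delta> > 0\<close> by (auto simp: e_def eventually_sequentially)
  define Q where "Q = p - smult (poly p \<omega>) ([:1/2, cnj \<omega>/2:] ^ k)"
  have Q: "poly Q z = poly p z - poly p \<omega> * e z ^ k" for z
    by (simp add: Q_def e_def poly_power add_divide_distrib mult.commute)
  have "e \<omega> = 1"
    unfolding e_def by (rule boundary_peak_poly(1)[OF \<open>cmod \<omega> = 1\<close>])
  then have "(\<lambda>z. (poly Q z - poly Q \<omega>) * f z - poly p z * f z) = (\<lambda>z. - poly p \<omega> * e z ^ k * f z)"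
    by (simp add: Q fun_eq_iff algebra_simps)
  moreover have "(\<lambda>z. (poly Q z - poly Q \<omega>) * f z) holomorphic_on ball 0 1"
    using fh by (intro holomorphic_intros)
  ultimately show "\<exists>F'. F' holomorphic_on ball 0 1 \<and> in_range_closure \<beta> \<phi> lam F' \<and>
      A2_energy \<beta> (\<lambda>z. F' z - poly p z * f z) < ennreal \<delta>"
    using k in_range_closure_poly_minus_DW_value[OF assms(1) dw f eig \<open>lam \<noteq> 0\<close>, of Q] by auto
qed

lemma in_range_closure_if_cyclic:
  assumes "\<beta> > -1" and dw: "denjoy_wolff_point \<phi> \<omega>" and "cmod \<omega> = 1"
    and cyc: "cyclic_A2 \<beta> f" and eig: "\<And>z. z \<in> ball 0 1 \<Longrightarrow> f (\<phi> z) = lam * f z"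
    and "lam \<noteq> 0" and g: "g \<in> A2 \<beta>"
  shows "in_range_closure \<beta> \<phi> lam g"
proof (rule in_range_closure_approx[OF assms(1)])
  show "self_map_disc \<phi>"
    using dw unfolding denjoy_wolff_point_def by simp
  show "g holomorphic_on ball 0 1"
    using g unfolding A2_def by simp
  have f: "f \<in> A2 \<beta>"
    using cyc unfolding cyclic_A2_def by simp
  fix \<delta> :: real
  assume "\<delta> > 0"
  then obtain p :: "complex poly" where p: "A2_norm \<beta> (\<lambda>z. poly p z * f z - g z) < sqrt \<delta>"
    using cyc g unfolding cyclic_A2_def by (meson real_sqrt_gt_0_iff)
  obtain M where "\<And>z. z \<in> cball 0 1 \<Longrightarrow> cmod (poly p z) \<le> M"
    using poly_bounded_on_compact[of "cball 0 1" p] by auto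
  then have pf: "(\<lambda>z. poly p z * f z) \<in> A2 \<beta>"
    by (intro A2_mult_bounded[OF assms(1) f, where M = M]) (auto intro: holomorphic_intros)
  have "A2_energy \<beta> (\<lambda>z. poly p z * f z - g z) < ennreal \<delta>"
    using p A2_norm_less_iff_energy[OF assms(1) A2_diff[OF assms(1) pf g], of "sqrt \<delta>"] \<open>\<delta> > 0\<close>
    by simp
  moreover have "(\<lambda>z. poly p z * f z) holomorphic_on ball 0 1"
    using pf unfolding A2_def by simp
  ultimately show "\<exists>F'. F' holomorphic_on ball 0 1 \<and> in_range_closure \<beta> \<phi> lam F' \<and>
      A2_energy \<beta> (\<lambda>z. F' z - g z) < ennreal \<delta>"
    using in_range_closure_poly_mult[OF assms(1-3) f eig \<open>lam \<noteq> 0\<close>] by blast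
qed

lemma comp_minus_dense_range_if_in_range_closure:
  assumes "\<beta> > -1" and "self_map_disc \<phi>" and "\<And>g. g \<in> A2 \<beta> \<Longrightarrow> in_range_closure \<beta> \<phi> lam g"
  shows "comp_minus_dense_range \<beta> \<phi> lam"
  unfolding comp_minus_dense_range_def
proof (intro ballI allI impI)
  fix g :: "complex \<Rightarrow> complex" and \<epsilon> :: real
  assume g: "g \<in> A2 \<beta>" and "\<epsilon> > 0"
  then obtain h where h: "h \<in> A2 \<beta>"
      and small: "A2_energy \<beta> (\<lambda>z. h (\<phi> z) - lam * h z - g z) < ennreal (\<epsilon>\<^sup>2)"
    using assms(3) unfolding in_range_closure_def by (meson zero_less_power)
  have hh: "h holomorphic_on ball 0 1" and gh: "g holomorphic_on ball 0 1"
    using h g unfolding A2_def by auto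
  have "(\<lambda>z. h (\<phi> z)) holomorphic_on ball 0 1"
    by (rule holomorphic_on_compose_self_map[OF assms(2) hh])
  then have "(\<lambda>z. h (\<phi> z) - lam * h z - g z) holomorphic_on ball 0 1"
    by (intro holomorphic_intros hh gh)
  moreover have "A2_energy \<beta> (\<lambda>z. h (\<phi> z) - lam * h z - g z) < \<infinity>"
    using small ennreal_less_top order.strict_trans by fastforce
  ultimately have "(\<lambda>z. h (\<phi> z) - lam * h z - g z) \<in> A2 \<beta>"
    using A2_iff_energy_finite[OF assms(1)] by blast
  then have "A2_norm \<beta> (\<lambda>z. h (\<phi> z) - lam * h z - g z) < \<epsilon>"
    using A2_norm_less_iff_energy[OF assms(1) _ \<open>\<epsilon> > 0\<close>] small by blast
  with h show "\<exists>h\<in>A2 \<beta>. A2_norm \<beta> (\<lambda>z. h (\<phi> z) - lam * h z - g z) < \<epsilon>"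
    by blast
qed

theorem theorem2p3:
  fixes \<beta> :: real and \<phi> :: "complex \<Rightarrow> complex" and \<omega> lam :: complex
    and f :: "complex \<Rightarrow> complex"
  assumes "\<beta> > -1"
    and "self_map_disc \<phi>"
    and "denjoy_wolff_point \<phi> \<omega>"
    and "cmod \<omega> = 1"
    and "comp_eigenvector \<beta> \<phi> lam f"
    and "cyclic_A2 \<beta> f"
  shows "comp_minus_dense_range \<beta> \<phi> lam"
proof -
  have f: "f \<in> A2 \<beta>" and nonzero: "\<exists>z\<in>ball 0 1. f z \<noteq> 0"
    and eig: "\<And>z. z \<in> ball 0 1 \<Longrightarrow> f (\<phi> z) = lam * f z"
    using assms(5) unfolding comp_eigenvector_def by auto
  have "lam \<noteq> 0"
    using f comp_eigenvalue_nonzero[OF assms(3,4) _ nonzero eig] unfolding A2_def by blast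
  then have "in_range_closure \<beta> \<phi> lam g" if "g \<in> A2 \<beta>" for g
    using in_range_closure_if_cyclic[OF assms(1,3,4,6) eig _ that] by blast
  then show ?thesis
    by (rule comp_minus_dense_range_if_in_range_closure[OF assms(1,2)])
qed

end
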